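(* Let $1\le k\le m$ and let $\phi_{m,k}$ be the automorphism of the free group $F_{m+k}=F(A_1,\dots,A_m,B_1,\dots,B_k)$ described below. Then $\operatorname{gr}_{\phi_{m,k}}(n)\preceq n^k$ and $\operatorname{gr}_{(\phi_{m,k})^{-1}}(n)\preceq n^k$.
   Context: $\phi_{m,k}(A_i)=A_1\cdots A_{i-1}A_iA_{i-1}^{-1}\cdots A_1^{-1}$ for $1\le i\le m$, and $\phi_{m,k}(B_j)=A_1\cdots A_m(B_1\cdots B_j)A_{j-1}^{-1}\cdots A_1^{-1}$ for $1\le j\le k$. $\operatorname{gr}_\psi(n)=\max_{x}\|\psi^n(x)\|$ over the free basis, $\|\cdot\|$ being word length. $f\preceq g$ means $f(n)\le Ag(n)+B$ for some $A>0,B\ge0$ and all $n$. *)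

theory Defs
  imports Complex_Main
begin

text \<open>A letter is (g, e) where g is the
generator index and e = True means the inverse of the generator.
Elements of the free group are represented by freely reduced words.\<close>

type_synonym letter = "nat \<times> bool"

definition inv_letter :: "letter \<Rightarrow> letter" where
  "inv_letter x = (fst x, \<not> snd x)"

definition inv_word :: "letter list \<Rightarrow> letter list" where
  "inv_word w = rev (map inv_letter w)"

definition red_step :: "letter \<Rightarrow> letter list \<Rightarrow> letter list" where
  "red_step x acc = (case acc of [] \<Rightarrow> [x]
      | y # ys \<Rightarrow> (if y = inv_letter x then ys else x # acc))"

definition reduce :: "letter list \<Rightarrow> letter list" where
  "reduce w = foldr red_step w []"

definition subst :: "(nat \<Rightarrow> letter list) \<Rightarrow> letter list \<Rightarrow> letter list" where
  "subst f w = reduce (concat (map (\<lambda>x. if snd x then inv_word (f (fst x)) else f (fst x)) w))"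

definition iter_len :: "(nat \<Rightarrow> letter list) \<Rightarrow> nat \<Rightarrow> nat \<Rightarrow> nat" where
  "iter_len f n g = length ((subst f ^^ n) [(g, False)])"

definition growth :: "(nat \<Rightarrow> letter list) \<Rightarrow> nat \<Rightarrow> nat \<Rightarrow> nat" where
  "growth f N n = Max ((iter_len f n) ` {..<N})"

definition dominated :: "(nat \<Rightarrow> real) \<Rightarrow> (nat \<Rightarrow> real) \<Rightarrow> bool" where
  "dominated f g \<longleftrightarrow> (\<exists>A B. A > 0 \<and> B \<ge> 0 \<and> (\<forall>n. f n \<le> A * g n + B))"

text \<open>Generators of F_{m+k}: A_i (1 \<le> i \<le> m) is index i-1, B_j (1 \<le> j \<le> k) is index m+j-1.\<close>
definition genA :: "nat \<Rightarrow> letter" where "genA i = (i - 1, False)"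
definition genAinv :: "nat \<Rightarrow> letter" where "genAinv i = (i - 1, True)"
definition genB :: "nat \<Rightarrow> nat \<Rightarrow> letter" where "genB m j = (m + j - 1, False)"

text \<open>phi_{m,k}: A_i \<mapsto> A_1..A_{i-1} A_i A_{i-1}^{-1}..A_1^{-1};
  B_j \<mapsto> A_1..A_m (B_1..B_j) A_{j-1}^{-1}..A_1^{-1}; other generators fixed
  (irrelevant, they are not in F_{m+k}).\<close>
definition phi :: "nat \<Rightarrow> nat \<Rightarrow> nat \<Rightarrow> letter list" where
  "phi m k g =
    (if g < m then
       (let i = g + 1 in map genA [1..<i] @ [genA i] @ map genAinv (rev [1..<i]))
     else if g < m + k then
       (let j = g - m + 1 in map genA [1..<m+1] @ map (genB m) [1..<j+1] @ map genAinv (rev [1..<j]))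
     else [(g, False)])"

definition inverse_on :: "nat \<Rightarrow> (nat \<Rightarrow> letter list) \<Rightarrow> (nat \<Rightarrow> letter list) \<Rightarrow> bool" where
  "inverse_on N f \<psi> \<longleftrightarrow>
     (\<forall>g<N. subst \<psi> (f g) = [(g, False)] \<and> subst f (\<psi> g) = [(g, False)])"

end

theory Submission
  imports Defs
begin

text \<open>
  Index the generators from 0, so that A_i is letter i (i < m) and B_t is letter m + t (t < k).
  Both phi and its inverse send A_i to a conjugate of A_i by a product of letters A_j^(+-1), j < i,
  and B_0 to such a product followed by B_0. By induction the n-th iterate conjugates A_i by
  A_0^(+-n) ... A_(i-1)^(+-n), and multiplies B_0 by A_0^(+-n) ... A_(m-1)^(+-n), so these basis
  elements grow linearly. For t > 0 the image of B_t consists of at most 2m letters A_j^(+-1) and of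
  letters B_s^(+-1), s <= t, each occurring at most once; since word length is subadditive, the
  length b_t(n) of the n-th iterate of B_t satisfies b_t(n+1) <= sum_(s<=t) b_s(n) + O(n), and
  induction on t gives b_t(n) = O(n^(t+1)). The inverse of phi is written down explicitly; any
  other inverse agrees with it on the basis up to free reduction and therefore has the same growth.
\<close>

section \<open>Free reduction\<close>

fun reduced :: "letter list \<Rightarrow> bool" where
  "reduced [] = True"
| "reduced [x] = True"
| "reduced (x # y # ys) = (y \<noteq> inv_letter x \<and> reduced (y # ys))"

lemma inv_letter_inv [simp]: "inv_letter (inv_letter x) = x"
  by (simp add: inv_letter_def)

lemma inv_letter_Pair [simp]: "inv_letter (a, b) = (a, \<not> b)"
  by (simp add: inv_letter_def)

lemma inv_word_Nil [simp]: "inv_word [] = []"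
  by (simp add: inv_word_def)

lemma inv_word_Cons [simp]: "inv_word (x # w) = inv_word w @ [inv_letter x]"
  by (simp add: inv_word_def)

lemma inv_word_append [simp]: "inv_word (u @ v) = inv_word v @ inv_word u"
  by (simp add: inv_word_def)

lemma inv_word_inv_word [simp]: "inv_word (inv_word w) = w"
  by (simp add: inv_word_def rev_map comp_def)

lemma length_inv_word [simp]: "length (inv_word w) = length w"
  by (simp add: inv_word_def)

lemma reduce_Nil [simp]: "reduce [] = []"
  by (simp add: reduce_def)

lemma reduce_Cons: "reduce (x # w) = red_step x (reduce w)"
  by (simp add: reduce_def)

lemma reduce_single [simp]: "reduce [x] = [x]"
  by (simp add: reduce_Cons red_step_def)

lemma reduced_reduce: "reduced (reduce w)"
proof (induct w)
  case (Cons x w)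
  then show ?case
    by (cases "reduce w" rule: reduced.cases) (auto simp: reduce_Cons red_step_def)
qed simp

lemma red_step_cancel:
  assumes "reduced w"
  shows "red_step x (red_step (inv_letter x) w) = w"
  using assms by (cases w rule: reduced.cases) (auto simp: red_step_def)

lemma reduce_reduce_append: "reduce (reduce u @ v) = reduce (u @ v)"
proof (induct u)
  case (Cons x u)
  show ?case
  proof (cases "\<exists>ys. reduce u = inv_letter x # ys")
    case True
    then obtain ys where ys: "reduce u = inv_letter x # ys" by blast
    have "reduce ((x # u) @ v) = red_step x (reduce (reduce u @ v))"
      by (simp add: reduce_Cons Cons)
    also have "\<dots> = red_step x (red_step (inv_letter x) (reduce (ys @ v)))"
      by (simp add: ys reduce_Cons)
    also have "\<dots> = reduce (ys @ v)"
      by (rule red_step_cancel[OF reduced_reduce])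
    also have "\<dots> = reduce (reduce (x # u) @ v)"
      by (simp add: reduce_Cons ys red_step_def)
    finally show ?thesis by simp
  next
    case False
    then have "red_step x (reduce u) = x # reduce u"
      by (cases "reduce u") (auto simp: red_step_def)
    then show ?thesis
      using Cons by (simp add: reduce_Cons)
  qed
qed simp

lemma reduce_reduce [simp]: "reduce (reduce u) = reduce u"
  using reduce_reduce_append[of u "[]"] by simp

lemma reduce_append_reduce: "reduce (u @ reduce v) = reduce (u @ v)"
  using reduce_reduce[of v] by (simp add: reduce_def)

lemma reduce_append_reduce_append: "reduce (u @ reduce v @ w) = reduce (u @ v @ w)"
  by (metis reduce_reduce_append reduce_append_reduce)

lemma reduce_cong_middle:
  "reduce v = reduce v' \<Longrightarrow> reduce (u @ v @ w) = reduce (u @ v' @ w)"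
  by (metis reduce_append_reduce_append)

lemma reduce_append_inv_word [simp]: "reduce (w @ inv_word w) = []"
proof (induct w)
  case (Cons x w)
  have "reduce ((x # w) @ inv_word (x # w))
      = red_step x (reduce (reduce (w @ inv_word w) @ [inv_letter x]))"
    by (simp add: reduce_Cons reduce_reduce_append)
  then show ?case
    using Cons by (simp add: red_step_def)
qed simp

lemma reduce_inv_word_append [simp]: "reduce (inv_word w @ w) = []"
  using reduce_append_inv_word[of "inv_word w"] by simp

lemma reduce_cancel: "reduce (u @ w @ inv_word w @ v) = reduce (u @ v)"
  using reduce_append_reduce_append[of u "w @ inv_word w" v] by simp

lemma reduce_cancel_inv: "reduce (u @ inv_word w @ w @ v) = reduce (u @ v)"
  using reduce_append_reduce_append[of u "inv_word w @ w" v] by simp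

lemma length_reduce_le: "length (reduce w) \<le> length w"
proof (induct w)
  case (Cons x w)
  then show ?case
    by (cases "reduce w") (auto simp: reduce_Cons red_step_def)
qed simp

lemma set_reduce_subset: "set (reduce w) \<subseteq> set w"
proof (induct w)
  case (Cons x w)
  then show ?case
    by (cases "reduce w") (auto simp: reduce_Cons red_step_def)
qed simp

lemma reduce_inv_word_reduce: "reduce (inv_word (reduce w)) = reduce (inv_word w)"
proof -
  have "reduce (inv_word w) = reduce (inv_word w @ reduce w @ inv_word (reduce w))"
    using reduce_append_reduce_append[of "inv_word w" "reduce w @ inv_word (reduce w)" "[]"]
    by simp
  also have "\<dots> = reduce (inv_word w @ w @ inv_word (reduce w))"
    by (rule reduce_append_reduce_append)
  also have "\<dots> = reduce (inv_word (reduce w))"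
    using reduce_cancel_inv[of "[]" w] by simp
  finally show ?thesis by simp
qed

lemma reduce_cong_inv_word: "reduce v = reduce v' \<Longrightarrow> reduce (inv_word v) = reduce (inv_word v')"
  by (metis reduce_inv_word_reduce)

lemma reduce_cong_conj:
  assumes "reduce u = reduce u'"
  shows "reduce (u @ v @ inv_word u) = reduce (u' @ v @ inv_word u')"
  using reduce_cong_middle[OF assms, of "[]" "v @ inv_word u"]
    reduce_cong_middle[OF reduce_cong_inv_word[OF assms], of "u' @ v" "[]"]
  by simp

section \<open>Endomorphisms and their iterates\<close>

definition letter_image :: "(nat \<Rightarrow> letter list) \<Rightarrow> letter \<Rightarrow> letter list" where
  "letter_image f x = (if snd x then inv_word (f (fst x)) else f (fst x))"

definition word_image :: "(nat \<Rightarrow> letter list) \<Rightarrow> letter list \<Rightarrow> letter list" where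
  "word_image f w = concat (map (letter_image f) w)"

lemma subst_eq_reduce_word_image: "subst f w = reduce (word_image f w)"
  by (simp add: subst_def word_image_def letter_image_def[abs_def])

lemma letter_image_Pair [simp]:
  "letter_image f (g, False) = f g" "letter_image f (g, True) = inv_word (f g)"
  by (simp_all add: letter_image_def)

lemma word_image_Nil [simp]: "word_image f [] = []"
  by (simp add: word_image_def)

lemma word_image_Cons: "word_image f (x # w) = letter_image f x @ word_image f w"
  by (simp add: word_image_def)

lemma word_image_single [simp]: "word_image f [x] = letter_image f x"
  by (simp add: word_image_def)

lemma word_image_append [simp]: "word_image f (u @ v) = word_image f u @ word_image f v"
  by (simp add: word_image_def)

lemma word_image_Cons_Pair [simp]:
  "word_image f ((g, False) # w) = f g @ word_image f w"
  "word_image f ((g, True) # w) = inv_word (f g) @ word_image f w"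
  by (simp_all add: word_image_def)

lemma word_image_replicate [simp]:
  "word_image f (replicate n x) = concat (replicate n (letter_image f x))"
  by (induct n) (simp_all add: word_image_Cons)

lemma word_image_inv_word [simp]: "word_image f (inv_word w) = inv_word (word_image f w)"
  by (induct w) (auto simp: word_image_Cons letter_image_def inv_letter_def)

lemma reduce_word_image_reduce: "reduce (word_image f (reduce w)) = reduce (word_image f w)"
proof (induct w)
  case (Cons x w)
  show ?case
  proof (cases "\<exists>ys. reduce w = inv_letter x # ys")
    case True
    then obtain ys where ys: "reduce w = inv_letter x # ys" by blast
    have "reduce (word_image f (x # w))
        = reduce (letter_image f x @ reduce (word_image f (reduce w)))"
      by (simp add: word_image_Cons reduce_append_reduce Cons)
    also have "\<dots> = reduce (letter_image f x @ inv_word (letter_image f x) @ word_image f ys)"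
      by (simp add: reduce_append_reduce ys word_image_Cons letter_image_def inv_letter_def)
    also have "\<dots> = reduce (word_image f (reduce (x # w)))"
      using reduce_cancel[of "[]"] by (simp add: reduce_Cons ys red_step_def)
    finally show ?thesis by simp
  next
    case False
    then have "reduce (x # w) = x # reduce w"
      by (cases "reduce w") (auto simp: reduce_Cons red_step_def)
    then show ?thesis
      using Cons by (metis word_image_Cons reduce_append_reduce)
  qed
qed simp

lemma subst_reduce: "subst f (reduce w) = subst f w"
  by (simp add: subst_eq_reduce_word_image reduce_word_image_reduce)

definition iterate :: "(nat \<Rightarrow> letter list) \<Rightarrow> nat \<Rightarrow> letter list \<Rightarrow> letter list" where
  "iterate f n w = reduce ((subst f ^^ n) w)"

lemma iterate_0 [simp]: "iterate f 0 w = reduce w"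
  by (simp add: iterate_def)

lemma iterate_Suc: "iterate f (Suc n) w = reduce (word_image f (iterate f n w))"
  by (simp add: iterate_def subst_eq_reduce_word_image reduce_word_image_reduce)

lemma iterate_reduce: "iterate f n (reduce w) = iterate f n w"
  by (cases n) (simp, simp only: iterate_def funpow_Suc_right comp_def subst_reduce)

lemma iterate_Suc_right: "iterate f (Suc n) w = iterate f n (word_image f w)"
proof -
  have "iterate f (Suc n) w = iterate f n (reduce (word_image f w))"
    by (simp only: iterate_def funpow_Suc_right comp_def subst_eq_reduce_word_image)
  then show ?thesis by (simp add: iterate_reduce)
qed

lemma iterate_Nil [simp]: "iterate f n [] = []"
  by (induct n) (simp_all add: iterate_Suc)

lemma iterate_append: "iterate f n (u @ v) = reduce (iterate f n u @ iterate f n v)"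
proof (induct n)
  case 0
  then show ?case by (simp add: reduce_reduce_append reduce_append_reduce)
next
  case (Suc n)
  have "iterate f (Suc n) (u @ v) = reduce (word_image f (reduce (iterate f n u @ iterate f n v)))"
    by (simp add: iterate_Suc Suc)
  also have "\<dots> = reduce (word_image f (iterate f n u) @ word_image f (iterate f n v))"
    by (simp add: reduce_word_image_reduce)
  finally show ?case
    by (simp add: iterate_Suc reduce_reduce_append reduce_append_reduce)
qed

lemma iterate_inv_word: "iterate f n (inv_word w) = reduce (inv_word (iterate f n w))"
proof (induct n)
  case 0
  then show ?case by (simp add: reduce_inv_word_reduce)
next
  case (Suc n)
  have "iterate f (Suc n) (inv_word w) = reduce (word_image f (reduce (inv_word (iterate f n w))))"
    by (simp add: iterate_Suc Suc)
  also have "\<dots> = reduce (inv_word (word_image f (iterate f n w)))"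
    by (simp add: reduce_word_image_reduce)
  finally show ?case
    by (simp add: iterate_Suc reduce_inv_word_reduce)
qed

lemma iter_len_eq_length_iterate: "iter_len f n g = length (iterate f n [(g, False)])"
  by (cases n) (simp_all add: iter_len_def iterate_def subst_def)

lemma iter_len_0 [simp]: "iter_len f 0 g = 1"
  by (simp add: iter_len_def)

lemma length_iterate_le_sum_iter_len:
  "length (iterate f n w) \<le> (\<Sum>x\<leftarrow>w. iter_len f n (fst x))"
proof (induct w)
  case (Cons x w)
  obtain g b where x: "x = (g, b)" by fastforce
  have "length (iterate f n [x]) \<le> iter_len f n g"
  proof (cases b)
    case True
    then have "iterate f n [x] = reduce (inv_word (iterate f n [(g, False)]))"
      using iterate_inv_word[of f n "[(g, False)]"] x by simp
    then show ?thesis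
      using length_reduce_le[of "inv_word (iterate f n [(g, False)])"]
      by (simp add: iter_len_eq_length_iterate)
  qed (simp add: x iter_len_eq_length_iterate)
  moreover have "length (iterate f n (x # w)) \<le> length (iterate f n [x]) + length (iterate f n w)"
    using iterate_append[of f n "[x]" w] length_reduce_le by (metis append_Cons append_Nil length_append)
  ultimately show ?case
    using Cons x by simp
qed simp

lemma iter_len_Suc_le: "iter_len f (Suc n) g \<le> (\<Sum>x\<leftarrow>f g. iter_len f n (fst x))"
  using length_iterate_le_sum_iter_len[of f n "f g"]
  by (simp add: iter_len_eq_length_iterate iterate_Suc_right)

lemma iterate_eq_reduce_if_orbit:
  assumes "reduce w = reduce (W 0)" and "\<And>n. reduce (word_image f (W n)) = reduce (W (Suc n))"
  shows "iterate f n w = reduce (W n)"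
proof (induct n)
  case (Suc n)
  then show ?case
    using assms(2)[of n] by (simp add: iterate_Suc reduce_word_image_reduce)
qed (simp add: assms(1))

section \<open>Conjugation by runs of generators\<close>

lemma reduce_power_conj:
  "reduce (u @ concat (replicate n (x @ y @ inv_word x)) @ v)
   = reduce (u @ x @ concat (replicate n y) @ inv_word x @ v)"
proof (induct n arbitrary: u)
  case 0
  then show ?case using reduce_cancel[of u x v] by simp
next
  case (Suc n)
  have "reduce (u @ concat (replicate (Suc n) (x @ y @ inv_word x)) @ v)
      = reduce ((u @ x @ y) @ inv_word x @ x @ concat (replicate n y) @ inv_word x @ v)"
    using Suc[of "u @ x @ y @ inv_word x"] by simp
  also have "\<dots> = reduce ((u @ x @ y) @ concat (replicate n y) @ inv_word x @ v)"
    by (rule reduce_cancel_inv)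
  finally show ?case by simp
qed

definition letter_run :: "bool \<Rightarrow> nat \<Rightarrow> nat \<Rightarrow> letter list" where
  "letter_run e a j = map (\<lambda>t. (a + t, e)) [0..<j]"

definition power_run :: "bool \<Rightarrow> nat \<Rightarrow> nat \<Rightarrow> letter list" where
  "power_run e n i = concat (map (\<lambda>t. replicate n (t, e)) [0..<i])"

lemma letter_run_0 [simp]: "letter_run e a 0 = []"
  by (simp add: letter_run_def)

lemma letter_run_Suc: "letter_run e a (Suc j) = letter_run e a j @ [(a + j, e)]"
  by (simp add: letter_run_def)

lemma length_letter_run [simp]: "length (letter_run e a j) = j"
  by (simp add: letter_run_def)

lemma set_letter_run: "set (letter_run e a j) = (\<lambda>t. (a + t, e)) ` {..<j}"
  by (auto simp: letter_run_def)

lemma power_run_0 [simp]: "power_run e n 0 = []"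
  by (simp add: power_run_def)

lemma power_run_Suc: "power_run e n (Suc i) = power_run e n i @ replicate n (i, e)"
  by (simp add: power_run_def)

lemma power_run_exponent_0 [simp]: "power_run e 0 i = []"
  by (simp add: power_run_def)

lemma length_power_run [simp]: "length (power_run e n i) = n * i"
  by (induct i) (simp_all add: power_run_Suc)

lemma sum_list_letter_run: "(\<Sum>x\<leftarrow>letter_run e a j. h (fst x)) = (\<Sum>s<j. h (a + s) :: nat)"
  by (induct j) (simp_all add: letter_run_Suc)

lemma sum_list_inv_word: "(\<Sum>x\<leftarrow>inv_word w. h (fst x)) = (\<Sum>x\<leftarrow>w. h (fst x) :: nat)"
  by (induct w) (simp_all add: inv_letter_def)

text \<open>
  The common shape of phi (e = False) and of its inverse (e = True) on A_0, ..., A_(m-1) and B_0: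
  each A_i is conjugated by A_0^(+-1) ... A_(i-1)^(+-1), and B_0 is multiplied on the left by
  A_0^(+-1) ... A_(m-1)^(+-1).
\<close>

locale prefix_conjugation =
  fixes e :: bool and m :: nat and f :: "nat \<Rightarrow> letter list"
  assumes image_less: "g < m \<Longrightarrow> f g = letter_run e 0 g @ [(g, False)] @ inv_word (letter_run e 0 g)"
    and image_m: "f m = letter_run e 0 m @ [(m, False)]"
begin

lemma letter_image_less:
  "g < m \<Longrightarrow> letter_image f (g, b) = letter_run e 0 g @ [(g, b)] @ inv_word (letter_run e 0 g)"
  by (cases b) (simp_all add: image_less)

lemma reduce_word_image_power_run:
  "i \<le> m \<Longrightarrow> reduce (word_image f (power_run e n i))
     = reduce (power_run e (Suc n) i @ inv_word (letter_run e 0 i))"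
proof (induct i)
  case (Suc i)
  let ?S = "letter_run e 0 i" and ?Q = "power_run e (Suc n) i"
  have "reduce (word_image f (power_run e n (Suc i)))
      = reduce (reduce (word_image f (power_run e n i))
                @ concat (replicate n (?S @ [(i, e)] @ inv_word ?S)))"
    using Suc.prems by (simp add: power_run_Suc letter_image_less reduce_reduce_append)
  also have "\<dots> = reduce ((?Q @ inv_word ?S) @ ?S @ replicate n (i, e) @ inv_word ?S @ [])"
    using Suc reduce_power_conj[of "?Q @ inv_word ?S" n ?S "[(i, e)]" "[]"]
    by (simp add: reduce_reduce_append)
  also have "\<dots> = reduce ((?Q @ replicate n (i, e)) @ [(i, e)] @ inv_word [(i, e)] @ inv_word ?S)"
    using reduce_cancel_inv[of ?Q ?S] reduce_cancel[of "?Q @ replicate n (i, e)" "[(i, e)]"]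
    by simp
  also have "\<dots> = reduce (power_run e (Suc n) (Suc i) @ inv_word (letter_run e 0 (Suc i)))"
    by (simp add: power_run_Suc letter_run_Suc replicate_app_Cons_same)
  finally show ?case .
qed simp

lemma iterate_less:
  assumes "g < m"
  shows "iterate f n [(g, False)]
    = reduce (power_run e n g @ [(g, False)] @ inv_word (power_run e n g))"
proof (rule iterate_eq_reduce_if_orbit)
  fix n
  let ?S = "letter_run e 0 g" and ?Q = "power_run e (Suc n) g"
  have "reduce (word_image f (power_run e n g @ [(g, False)] @ inv_word (power_run e n g)))
      = reduce ((?Q @ inv_word ?S) @ f g @ inv_word (?Q @ inv_word ?S))"
    using assms by (simp add: reduce_cong_conj reduce_word_image_power_run)
  also have "\<dots> = reduce (?Q @ inv_word ?S @ ?S @ [(g, False)] @ inv_word ?S @ ?S @ inv_word ?Q)"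
    using assms by (simp add: image_less)
  also have "\<dots> = reduce (?Q @ [(g, False)] @ inv_word ?Q)"
    using reduce_cancel_inv[of ?Q ?S] reduce_cancel_inv[of "?Q @ [(g, False)]" ?S] by simp
  finally show "reduce (word_image f (power_run e n g @ [(g, False)] @ inv_word (power_run e n g)))
      = reduce (?Q @ [(g, False)] @ inv_word ?Q)" .
qed simp

lemma iterate_m: "iterate f n [(m, False)] = reduce (power_run e n m @ [(m, False)])"
proof (rule iterate_eq_reduce_if_orbit)
  fix n
  let ?S = "letter_run e 0 m" and ?Q = "power_run e (Suc n) m"
  have "reduce (word_image f (power_run e n m @ [(m, False)]))
      = reduce (reduce (word_image f (power_run e n m)) @ ?S @ [(m, False)])"
    by (simp add: reduce_reduce_append image_m)
  also have "\<dots> = reduce (?Q @ inv_word ?S @ ?S @ [(m, False)])"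
    by (simp add: reduce_word_image_power_run reduce_reduce_append)
  finally show "reduce (word_image f (power_run e n m @ [(m, False)])) = reduce (?Q @ [(m, False)])"
    by (simp add: reduce_cancel_inv)
qed simp

lemma iter_len_less_le: "g < m \<Longrightarrow> iter_len f n g \<le> 2 * g * n + 1"
  using length_reduce_le[of "power_run e n g @ [(g, False)] @ inv_word (power_run e n g)"]
  by (simp add: iter_len_eq_length_iterate iterate_less algebra_simps)

lemma iter_len_m_le: "iter_len f n m \<le> n * m + 1"
  using length_reduce_le[of "power_run e n m @ [(m, False)]"]
  by (simp add: iter_len_eq_length_iterate iterate_m)

lemma sum_iter_len_less_le:
  "\<forall>x\<in>set w. fst x < m \<Longrightarrow> (\<Sum>x\<leftarrow>w. iter_len f n (fst x)) \<le> length w * (2 * m * n + 1)"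
proof (induct w)
  case (Cons x w)
  then have "2 * fst x * n \<le> 2 * m * n"
    by (intro mult_le_mono1) simp
  then have "iter_len f n (fst x) \<le> 2 * m * n + 1"
    using Cons.prems iter_len_less_le[of "fst x" n] by (meson add_le_mono1 le_trans list.set_intros(1))
  then show ?case
    using Cons by simp
qed simp

lemma reduce_word_image_letter_run_opposite:
  "i \<le> m \<Longrightarrow> reduce (word_image f (letter_run (\<not> e) 0 i)) = reduce (inv_word (letter_run e 0 i))"
proof (induct i)
  case (Suc i)
  let ?S = "letter_run e 0 i"
  have "reduce (word_image f (letter_run (\<not> e) 0 (Suc i)))
      = reduce (reduce (word_image f (letter_run (\<not> e) 0 i)) @ ?S @ [(i, \<not> e)] @ inv_word ?S)"
    using Suc.prems letter_image_less[of i "\<not> e"]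
    by (simp add: letter_run_Suc reduce_reduce_append)
  also have "\<dots> = reduce (inv_word ?S @ ?S @ [(i, \<not> e)] @ inv_word ?S)"
    using Suc by (simp add: reduce_reduce_append)
  finally show ?case
    using reduce_cancel_inv[of "[]" ?S] by (simp add: letter_run_Suc)
qed simp

end

section \<open>Polynomial bounds from a triangular recurrence\<close>

lemma polynomial_bound_of_bounded_increments:
  fixes x :: "nat \<Rightarrow> nat"
  assumes "x 0 \<le> c" and "\<And>n. x (Suc n) \<le> x n + K * (n + 1) ^ j"
  shows "x n \<le> (c + K) * (n + 1) ^ (j + 1)"
proof (induct n)
  case 0
  then show ?case using assms(1) by simp
next
  case (Suc n)
  have "x (Suc n) \<le> x n + K * (n + 1) ^ j"
    by (rule assms(2))
  also have "\<dots> \<le> (c + K) * (n + 1) ^ (j + 1) + (c + K) * (n + 1) ^ j"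
    using Suc by (intro add_le_mono mult_le_mono1) simp_all
  also have "\<dots> = (c + K) * ((n + 2) * (n + 1) ^ j)"
    by (simp add: algebra_simps)
  also have "\<dots> \<le> (c + K) * ((n + 2) * (n + 2) ^ j)"
    by (intro mult_le_mono2 power_mono) simp_all
  finally show ?case by simp
qed

lemma polynomial_bound_of_triangular_recurrence:
  fixes b :: "nat \<Rightarrow> nat \<Rightarrow> nat"
  assumes base: "\<And>n. b 0 n \<le> L * (n + 1)"
    and init: "\<And>t. t < k \<Longrightarrow> b t 0 \<le> L"
    and step: "\<And>t n. 0 < t \<Longrightarrow> t < k \<Longrightarrow> b t (Suc n) \<le> (\<Sum>s\<le>t. b s n) + L * (n + 1)"
    and "t < k"
  shows "\<exists>C. \<forall>s\<le>t. \<forall>n. b s n \<le> C * (n + 1) ^ (s + 1)"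
  using \<open>t < k\<close>
proof (induct t)
  case 0
  then show ?case using base by auto
next
  case (Suc t)
  then obtain C where C: "\<And>s n. s \<le> t \<Longrightarrow> b s n \<le> C * (n + 1) ^ (s + 1)" by auto
  have C_t: "b s n \<le> C * (n + 1) ^ (t + 1)" if "s \<le> t" for s n
  proof -
    have "(n + 1) ^ (s + 1) \<le> (n + 1) ^ (t + 1)"
      using that by (intro power_increasing) simp_all
    then show ?thesis
      using C[OF that, of n] by (meson le_trans mult_le_mono2)
  qed
  define K where "K = Suc t * C + L"
  have "b (Suc t) (Suc n) \<le> b (Suc t) n + K * (n + 1) ^ (t + 1)" for n
  proof -
    have "(\<Sum>s\<le>t. b s n) \<le> (\<Sum>s\<le>t. C * (n + 1) ^ (t + 1))"
      by (rule sum_mono) (rule C_t, simp)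
    also have "\<dots> = Suc t * C * (n + 1) ^ (t + 1)"
      by (simp only: sum_constant card_atMost of_nat_id mult.assoc)
    finally have lower: "(\<Sum>s\<le>t. b s n) \<le> Suc t * C * (n + 1) ^ (t + 1)" .
    have "L * (n + 1) ^ 1 \<le> L * (n + 1) ^ (t + 1)"
      by (intro mult_le_mono2 power_increasing) simp_all
    moreover have "K * (n + 1) ^ (t + 1) = Suc t * C * (n + 1) ^ (t + 1) + L * (n + 1) ^ (t + 1)"
      by (simp only: K_def add_mult_distrib)
    ultimately show ?thesis
      using step[of "Suc t" n] Suc.prems lower by simp
  qed
  then have new: "b (Suc t) n \<le> (L + K) * (n + 1) ^ (Suc t + 1)" for n
    using polynomial_bound_of_bounded_increments[of "b (Suc t)" L K "t + 1" n] init Suc.prems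
    by simp
  have "b s n \<le> (C + L + K) * (n + 1) ^ (s + 1)" if "s \<le> Suc t" for s n
  proof (cases "s = Suc t")
    case True
    then show ?thesis
      using le_trans[OF new[of n] mult_le_mono1[of "L + K" "C + L + K"]] by simp
  next
    case False
    then show ?thesis
      using le_trans[OF C[of s n] mult_le_mono1[of C "C + L + K"]] that by simp
  qed
  then show ?case by blast
qed

context prefix_conjugation
begin

text \<open>
  B_0 is covered by the closed form iterate_m: the recurrence alone would only give a quadratic
  bound for it, since its A-letters cancel across iterations.
\<close>

lemma iter_len_polynomial_bound:
  assumes "1 \<le> k"
    and recurrence: "\<And>t n. 0 < t \<Longrightarrow> t < k \<Longrightarrow> iter_len f (Suc n) (m + t)
      \<le> (\<Sum>s\<le>t. iter_len f n (m + s)) + 2 * m * (2 * m * n + 1)"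
  shows "\<exists>D. \<forall>g<m + k. \<forall>n. iter_len f n g \<le> D * (n + 1) ^ k"
proof -
  define L where "L = (2 * m + 1) * (2 * m + 1)"
  have L_linear: "n * m + 1 \<le> L * (n + 1)" "2 * m * (2 * m * n + 1) \<le> L * (n + 1)" for n
    by (simp_all add: L_def algebra_simps)
  have "\<exists>C. \<forall>s\<le>k - 1. \<forall>n. iter_len f n (m + s) \<le> C * (n + 1) ^ (s + 1)"
  proof (rule polynomial_bound_of_triangular_recurrence[where L = L])
    show "iter_len f n (m + 0) \<le> L * (n + 1)" for n
      using iter_len_m_le[of n] L_linear(1)[of n] by simp
    show "iter_len f 0 (m + t) \<le> L" for t
      by (simp add: L_def)
    show "iter_len f (Suc n) (m + t) \<le> (\<Sum>s\<le>t. iter_len f n (m + s)) + L * (n + 1)"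
      if "0 < t" "t < k" for t n
      using recurrence[OF that, of n] L_linear(2)[of n] by linarith
  qed (use assms in simp)
  then obtain C where C: "\<And>s n. s \<le> k - 1 \<Longrightarrow> iter_len f n (m + s) \<le> C * (n + 1) ^ (s + 1)"
    by blast
  have "iter_len f n g \<le> (C + 2 * m + 1) * (n + 1) ^ k" if "g < m + k" for g n
  proof (cases "g < m")
    case True
    have "2 * g * n \<le> 2 * m * n"
      using True by (intro mult_le_mono1) simp
    then have "iter_len f n g \<le> 2 * m * n + 1"
      using iter_len_less_le[OF True, of n] by linarith
    also have "\<dots> \<le> (2 * m + 1) * (n + 1)"
      by (simp add: algebra_simps)
    also have "\<dots> \<le> (C + 2 * m + 1) * (n + 1) ^ k"
      using power_increasing[of 1 k "n + 1"] assms(1) by (intro mult_le_mono) simp_all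
    finally show ?thesis .
  next
    case False
    define t where "t = g - m"
    have t: "g = m + t" "t < k"
      using False that by (simp_all add: t_def)
    have "iter_len f n g \<le> C * (n + 1) ^ (t + 1)"
      using C[of t n] t by simp
    also have "\<dots> \<le> (C + 2 * m + 1) * (n + 1) ^ k"
      using power_increasing[of "t + 1" k "n + 1"] t by (intro mult_le_mono) simp_all
    finally show ?thesis .
  qed
  then show ?thesis by blast
qed

end

section \<open>The automorphism phi\<close>

lemma map_upt_Suc_shift: "map h [Suc 0..<Suc g] = map (\<lambda>t. h (Suc t)) [0..<g]"
  by (simp only: map_Suc_upt[symmetric] map_map comp_def)

lemma phi_less:
  "g < m \<Longrightarrow> phi m k g = letter_run False 0 g @ [(g, False)] @ inv_word (letter_run False 0 g)"
  unfolding phi_def Let_def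
  by (simp del: upt_Suc add: map_upt_Suc_shift rev_map[symmetric] letter_run_def inv_word_def
      genA_def genAinv_def comp_def)

lemma phi_add:
  "t < k \<Longrightarrow> phi m k (m + t)
     = letter_run False 0 m @ letter_run False m (Suc t) @ inv_word (letter_run False 0 t)"
  unfolding phi_def Let_def
  by (simp del: upt_Suc add: map_upt_Suc_shift rev_map[symmetric] letter_run_def inv_word_def
      genA_def genAinv_def genB_def comp_def)

lemma phi_ge: "m + k \<le> g \<Longrightarrow> phi m k g = [(g, False)]"
  by (simp add: phi_def)

lemma prefix_conjugation_phi: "1 \<le> k \<Longrightarrow> prefix_conjugation False m (phi m k)"
  using phi_add[of 0 k m] by unfold_locales (simp_all add: phi_less letter_run_Suc)

lemma iter_len_phi_recurrence:
  assumes "t < k" and "k \<le> m"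
  shows "iter_len (phi m k) (Suc n) (m + t)
    \<le> (\<Sum>s\<le>t. iter_len (phi m k) n (m + s)) + 2 * m * (2 * m * n + 1)"
proof -
  interpret prefix_conjugation False m "phi m k"
    using assms by (intro prefix_conjugation_phi) simp
  let ?h = "iter_len (phi m k) n" and ?c = "2 * m * n + 1"
  have A: "(\<Sum>x\<leftarrow>letter_run False 0 j. ?h (fst x)) \<le> j * ?c" if "j \<le> m" for j
    using that sum_iter_len_less_le[of "letter_run False 0 j" n] by (auto simp: set_letter_run)
  have "iter_len (phi m k) (Suc n) (m + t)
      \<le> (\<Sum>x\<leftarrow>letter_run False 0 m. ?h (fst x)) + (\<Sum>x\<leftarrow>letter_run False m (Suc t). ?h (fst x))
         + (\<Sum>x\<leftarrow>letter_run False 0 t. ?h (fst x))"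
    using iter_len_Suc_le[of "phi m k" n "m + t"] assms(1)
    by (simp add: phi_add sum_list_inv_word)
  also have "\<dots> \<le> m * ?c + (\<Sum>s\<le>t. ?h (m + s)) + t * ?c"
    using A[of m] A[of t] assms by (simp add: sum_list_letter_run lessThan_Suc_atMost)
  also have "\<dots> \<le> (\<Sum>s\<le>t. ?h (m + s)) + 2 * m * ?c"
    using assms mult_le_mono1[of t m ?c] by simp
  finally show ?thesis .
qed

section \<open>The inverse of phi\<close>

text \<open>
  In the paper's 1-based notation: A_i is sent to A_1^-1 ... A_(i-1)^-1 A_i A_(i-1) ... A_1,
  B_1 to A_1^-1 ... A_m^-1 B_1, and B_j (j >= 2) to A_1^-1 ... A_(j-2)^-1 B_(j-1)^-1 B_j A_(j-1) ... A_1.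
\<close>

definition phi_inverse :: "nat \<Rightarrow> nat \<Rightarrow> nat \<Rightarrow> letter list" where
  "phi_inverse m k g =
    (if g < m then letter_run True 0 g @ [(g, False)] @ inv_word (letter_run True 0 g)
     else if g = m then letter_run True 0 m @ [(m, False)]
     else if g < m + k then
       letter_run True 0 (g - m - 1) @ [(g - 1, True), (g, False)] @ inv_word (letter_run True 0 (g - m))
     else [(g, False)])"

lemma phi_inverse_Suc:
  "Suc t < k \<Longrightarrow> phi_inverse m k (Suc (m + t))
     = letter_run True 0 t @ [(m + t, True), (Suc (m + t), False)] @ inv_word (letter_run True 0 (Suc t))"
  by (simp add: phi_inverse_def)

lemma phi_inverse_ge: "0 < k \<Longrightarrow> m + k \<le> g \<Longrightarrow> phi_inverse m k g = [(g, False)]"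
  by (simp add: phi_inverse_def)

lemma prefix_conjugation_phi_inverse: "prefix_conjugation True m (phi_inverse m k)"
  by unfold_locales (simp_all add: phi_inverse_def)

lemma iter_len_phi_inverse_recurrence:
  assumes "0 < t" and "t < k" and "k \<le> m"
  shows "iter_len (phi_inverse m k) (Suc n) (m + t)
    \<le> (\<Sum>s\<le>t. iter_len (phi_inverse m k) n (m + s)) + 2 * m * (2 * m * n + 1)"
proof -
  interpret prefix_conjugation True m "phi_inverse m k"
    by (rule prefix_conjugation_phi_inverse)
  obtain t' where t: "t = Suc t'"
    using assms(1) gr0_implies_Suc by blast
  let ?h = "iter_len (phi_inverse m k) n" and ?c = "2 * m * n + 1"
  have A: "(\<Sum>x\<leftarrow>letter_run True 0 j. ?h (fst x)) \<le> j * ?c" if "j \<le> m" for j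
    using that sum_iter_len_less_le[of "letter_run True 0 j" n] by (auto simp: set_letter_run)
  have "?h (m + t') \<le> (\<Sum>s\<le>t'. ?h (m + s))"
    by (rule member_le_sum) auto
  then have B: "?h (m + t') + ?h (m + t) \<le> (\<Sum>s\<le>t. ?h (m + s))"
    by (simp add: t)
  have image: "phi_inverse m k (m + t)
      = letter_run True 0 t' @ [(m + t', True), (m + t, False)] @ inv_word (letter_run True 0 t)"
    using phi_inverse_Suc[of t' k m] t assms(2) by simp
  have "t' \<le> m" "t \<le> m"
    using assms t by simp_all
  note A = A[OF this(1)] A[OF this(2)]
  have "iter_len (phi_inverse m k) (Suc n) (m + t) \<le> (\<Sum>x\<leftarrow>phi_inverse m k (m + t). ?h (fst x))"
    by (rule iter_len_Suc_le)
  also have "\<dots> = (\<Sum>x\<leftarrow>letter_run True 0 t'. ?h (fst x)) + (?h (m + t') + ?h (m + t))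
         + (\<Sum>x\<leftarrow>letter_run True 0 t. ?h (fst x))"
    by (simp add: image sum_list_inv_word)
  also have "\<dots> \<le> t' * ?c + (\<Sum>s\<le>t. ?h (m + s)) + t * ?c"
    using A B by linarith
  also have "\<dots> \<le> (\<Sum>s\<le>t. ?h (m + s)) + 2 * m * ?c"
    using mult_le_mono1[OF \<open>t' \<le> m\<close>, of ?c] mult_le_mono1[OF \<open>t \<le> m\<close>, of ?c]
    by (simp add: mult.assoc)
  finally show ?thesis .
qed

lemma reduce_word_image_phi_inverse_letter_run:
  "t < k \<Longrightarrow> reduce (word_image (phi_inverse m k) (letter_run False m (Suc t)))
     = reduce (letter_run True 0 m @ [(m + t, False)] @ inv_word (letter_run True 0 t))"
proof (induct t)
  case 0
  then show ?case by (simp add: letter_run_Suc phi_inverse_def)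
next
  case (Suc t)
  let ?S = "letter_run True 0" and ?x = "\<lambda>i. (m + i, False)"
  have "reduce (word_image (phi_inverse m k) (letter_run False m (Suc (Suc t))))
      = reduce (reduce (word_image (phi_inverse m k) (letter_run False m (Suc t)))
                @ phi_inverse m k (Suc (m + t)))"
    by (simp add: letter_run_Suc[of False m "Suc t"] reduce_reduce_append)
  also have "\<dots> = reduce ((?S m @ [?x t]) @ inv_word (?S t) @ ?S t @ inv_word [?x t] @ [?x (Suc t)]
                @ inv_word (?S (Suc t)))"
    using Suc by (simp add: reduce_reduce_append phi_inverse_Suc)
  also have "\<dots> = reduce (?S m @ [?x t] @ inv_word [?x t] @ [?x (Suc t)] @ inv_word (?S (Suc t)))"
    by (simp only: reduce_cancel_inv) simp
  also have "\<dots> = reduce (?S m @ [?x (Suc t)] @ inv_word (?S (Suc t)))"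
    by (rule reduce_cancel)
  finally show ?case .
qed

lemma subst_phi_inverse_phi:
  assumes "1 \<le> k" and "k \<le> m" and "g < m + k"
  shows "subst (phi_inverse m k) (phi m k g) = [(g, False)]"
proof -
  interpret psi: prefix_conjugation True m "phi_inverse m k"
    by (rule prefix_conjugation_phi_inverse)
  let ?S = "letter_run True 0" and ?f = "phi_inverse m k"
  have image_run: "reduce (word_image ?f (letter_run False 0 i)) = reduce (inv_word (?S i))"
    if "i \<le> m" for i
    using psi.reduce_word_image_letter_run_opposite[OF that] by simp
  show ?thesis
  proof (cases "g < m")
    case True
    have "subst ?f (phi m k g)
        = reduce (word_image ?f (letter_run False 0 g) @ ?f g @ inv_word (word_image ?f (letter_run False 0 g)))"
      by (simp add: subst_eq_reduce_word_image phi_less[OF True])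
    also have "\<dots> = reduce (inv_word (?S g) @ ?f g @ inv_word (inv_word (?S g)))"
      by (rule reduce_cong_conj) (simp add: image_run True less_imp_le)
    also have "\<dots> = reduce (inv_word (?S g) @ ?S g @ [(g, False)] @ inv_word (?S g) @ ?S g)"
      using True by (simp add: psi.image_less)
    finally show ?thesis
      using reduce_cancel_inv[of "[]" "?S g"] reduce_cancel_inv[of "[(g, False)]" "?S g" "[]"] by simp
  next
    case False
    define t where "t = g - m"
    have t: "g = m + t" "t < k"
      using False assms by (simp_all add: t_def)
    let ?W = "word_image ?f (letter_run False 0 t)"
    have "subst ?f (phi m k g)
        = reduce (word_image ?f (letter_run False 0 m) @ word_image ?f (letter_run False m (Suc t))
                  @ inv_word ?W)"
      by (simp add: subst_eq_reduce_word_image t phi_add)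
    also have "\<dots> = reduce (inv_word (?S m) @ word_image ?f (letter_run False m (Suc t)) @ inv_word ?W)"
      using reduce_cong_middle[OF image_run[of m], of "[]"] by simp
    also have "\<dots> = reduce (inv_word (?S m) @ (?S m @ [(g, False)] @ inv_word (?S t)) @ inv_word ?W)"
      by (rule reduce_cong_middle) (use reduce_word_image_phi_inverse_letter_run[OF t(2)] t(1) in simp)
    also have "\<dots> = reduce ((inv_word (?S m) @ ?S m @ [(g, False)] @ inv_word (?S t)) @ ?S t)"
      using t assms reduce_cong_middle[OF reduce_cong_inv_word[OF image_run[of t]],
          of "inv_word (?S m) @ ?S m @ [(g, False)] @ inv_word (?S t)" "[]"]
      by simp
    finally show ?thesis
      using reduce_cancel_inv[of "[]" "?S m"] reduce_cancel_inv[of "[(g, False)]" "?S t" "[]"] by simp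
  qed
qed

lemma subst_phi_phi_inverse:
  assumes "1 \<le> k" and "k \<le> m" and "g < m + k"
  shows "subst (phi m k) (phi_inverse m k g) = [(g, False)]"
proof -
  interpret phi: prefix_conjugation False m "phi m k"
    using assms(1) by (rule prefix_conjugation_phi)
  let ?F = "letter_run False 0" and ?f = "phi m k"
  have image_run: "reduce (word_image ?f (letter_run True 0 i)) = reduce (inv_word (?F i))"
    if "i \<le> m" for i
    using phi.reduce_word_image_letter_run_opposite[OF that] by simp
  consider "g < m" | "g = m" | t where "g = Suc (m + t)" "Suc t < k"
    using assms(3) by (metis add_Suc_right less_imp_Suc_add linorder_neqE_nat nat_add_left_cancel_less)
  then show ?thesis
  proof cases
    case 1
    have "subst ?f (phi_inverse m k g)
        = reduce (word_image ?f (letter_run True 0 g) @ ?f g @ inv_word (word_image ?f (letter_run True 0 g)))"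
      using 1 by (simp add: subst_eq_reduce_word_image phi_inverse_def)
    also have "\<dots> = reduce (inv_word (?F g) @ ?f g @ inv_word (inv_word (?F g)))"
      using 1 by (intro reduce_cong_conj image_run) simp
    finally show ?thesis
      using 1 reduce_cancel_inv[of "[]" "?F g"] reduce_cancel[of "[(g, False)]" "inv_word (?F g)" "[]"]
      by (simp add: phi.image_less)
  next
    case 2
    have "subst ?f (phi_inverse m k g) = reduce (word_image ?f (letter_run True 0 m) @ ?f m @ [])"
      using 2 by (simp add: subst_eq_reduce_word_image phi_inverse_def)
    also have "\<dots> = reduce (inv_word (?F m) @ ?F m @ [(m, False)])"
      using reduce_cong_middle[OF image_run[of m], of "[]"] by (simp add: phi.image_m)
    finally show ?thesis
      using 2 reduce_cancel_inv[of "[]" "?F m"] by simp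
  next
    case (3 t)
    let ?R = "letter_run False m (Suc t)" and ?x = "(Suc (m + t), False)"
    let ?W = "word_image ?f (letter_run True 0 (Suc t))"
    have image_t: "?f (m + t) = ?F m @ ?R @ inv_word (?F t)"
      using 3 by (intro phi_add) simp
    have image_Suc_t: "?f (Suc (m + t)) = ?F m @ ?R @ [?x] @ inv_word (?F (Suc t))"
      using phi_add[of "Suc t" k m] 3 by (simp add: letter_run_Suc)
    have "subst ?f (phi_inverse m k g)
        = reduce (word_image ?f (letter_run True 0 t) @ (inv_word (?f (m + t)) @ ?f (Suc (m + t)))
                  @ inv_word ?W)"
      using 3 by (simp add: subst_eq_reduce_word_image phi_inverse_Suc)
    also have "\<dots> = reduce (inv_word (?F t) @ (inv_word (?f (m + t)) @ ?f (Suc (m + t))) @ inv_word ?W)"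
      using 3 assms reduce_cong_middle[OF image_run[of t], of "[]"] by simp
    also have "\<dots> = reduce ((inv_word (?F t) @ inv_word (?f (m + t)) @ ?f (Suc (m + t))) @ ?F (Suc t))"
      using 3 assms reduce_cong_middle[OF reduce_cong_inv_word[OF image_run[of "Suc t"]],
          of "inv_word (?F t) @ inv_word (?f (m + t)) @ ?f (Suc (m + t))" "[]"]
      by simp
    also have "\<dots> = reduce (inv_word (?F t) @ ?F t @ inv_word ?R @ inv_word (?F m) @ ?F m @ ?R @ [?x]
                  @ inv_word (?F (Suc t)) @ ?F (Suc t))"
      by (simp add: image_t image_Suc_t)
    also have "\<dots> = reduce (inv_word ?R @ ?R @ [?x] @ inv_word (?F (Suc t)) @ ?F (Suc t))"
      using reduce_cancel_inv[of "[]" "?F t"] reduce_cancel_inv[of "inv_word ?R" "?F m"] by simp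
    also have "\<dots> = [?x]"
      using reduce_cancel_inv[of "[]" ?R] reduce_cancel_inv[of "[?x]" "?F (Suc t)" "[]"] by simp
    finally show ?thesis
      using 3 by simp
  qed
qed

lemma inverse_on_phi_inverse: "1 \<le> k \<Longrightarrow> k \<le> m \<Longrightarrow> inverse_on (m + k) (phi m k) (phi_inverse m k)"
  by (simp add: inverse_on_def subst_phi_inverse_phi subst_phi_phi_inverse)

section \<open>Uniqueness of the inverse and the growth functions\<close>

lemma subst_subst_eq_reduce:
  assumes left_inverse: "\<And>h. subst g (f h) = [(h, False)]"
  shows "subst g (subst f w) = reduce w"
proof -
  have letter: "reduce (word_image g (letter_image f x)) = [x]" for x
  proof (cases x)
    case (Pair a b)
    then show ?thesis
      using left_inverse[of a] reduce_inv_word_reduce[of "word_image g (f a)"]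
      by (cases b) (simp_all add: subst_eq_reduce_word_image)
  qed
  have "reduce (word_image g (word_image f w)) = reduce w"
  proof (induct w)
    case (Cons x w)
    have "reduce (word_image g (word_image f (x # w)))
        = reduce (reduce (word_image g (letter_image f x)) @ reduce (word_image g (word_image f w)))"
      by (simp add: word_image_Cons reduce_reduce_append reduce_append_reduce)
    then show ?case
      using Cons letter[of x] reduce_append_reduce[of "[x]" w] by simp
  qed simp
  then show ?thesis
    by (simp add: subst_eq_reduce_word_image reduce_word_image_reduce)
qed

definition letters_below :: "nat \<Rightarrow> letter list \<Rightarrow> bool" where
  "letters_below N w \<longleftrightarrow> (\<forall>x\<in>set w. fst x < N)"

lemma letters_below_inv_word [simp]: "letters_below N (inv_word w) \<longleftrightarrow> letters_below N w"
  by (auto simp: letters_below_def inv_word_def inv_letter_def)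

lemma letters_below_subst:
  assumes "\<And>h. h < N \<Longrightarrow> letters_below N (f h)" and "letters_below N w"
  shows "letters_below N (subst f w)"
proof -
  have "letters_below N (word_image f w)"
    using assms(2)
  proof (induct w)
    case (Cons x w)
    then have "fst x < N"
      by (simp add: letters_below_def)
    then have "letters_below N (letter_image f x)"
      using assms(1) by (simp add: letter_image_def)
    then show ?case
      using Cons by (auto simp: word_image_Cons letters_below_def)
  qed (simp add: letters_below_def)
  then show ?thesis
    using set_reduce_subset[of "word_image f w"]
    by (auto simp: subst_eq_reduce_word_image letters_below_def)
qed

lemma subst_cong_letters_below:
  assumes "letters_below N w" and "\<And>h. h < N \<Longrightarrow> reduce (f h) = reduce (f' h)"
  shows "subst f w = subst f' w"
proof -
  have "reduce (word_image f w) = reduce (word_image f' w)"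
    using assms(1)
  proof (induct w)
    case (Cons x w)
    then have "fst x < N" "letters_below N w"
      by (auto simp: letters_below_def)
    then have "reduce (letter_image f x) = reduce (letter_image f' x)"
      using assms(2) by (auto simp: letter_image_def intro: reduce_cong_inv_word)
    then show ?case
      using Cons \<open>letters_below N w\<close>
      by (metis word_image_Cons reduce_reduce_append reduce_append_reduce)
  qed simp
  then show ?thesis
    by (simp add: subst_eq_reduce_word_image)
qed

lemma growth_cong:
  assumes "\<And>h. h < N \<Longrightarrow> letters_below N (f' h)"
    and "\<And>h. h < N \<Longrightarrow> reduce (f h) = reduce (f' h)"
  shows "growth f N n = growth f' N n"
proof -
  have "(subst f ^^ n) w = (subst f' ^^ n) w \<and> letters_below N ((subst f' ^^ n) w)"
    if "letters_below N w" for w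
  proof (induct n)
    case (Suc n)
    then have "letters_below N ((subst f' ^^ n) w)"
      by simp
    then have "subst f ((subst f' ^^ n) w) = subst f' ((subst f' ^^ n) w)"
      and "letters_below N (subst f' ((subst f' ^^ n) w))"
      by (auto intro: subst_cong_letters_below letters_below_subst assms)
    then show ?case
      using Suc by simp
  qed (simp add: that)
  then have "iter_len f n g = iter_len f' n g" if "g < N" for g
    using that by (simp add: iter_len_def letters_below_def)
  then show ?thesis
    unfolding growth_def by (metis (no_types, lifting) image_cong lessThan_iff)
qed

lemma reduce_eq_phi_inverse_if_inverse_on:
  assumes "1 \<le> k" and "k \<le> m" and "inverse_on (m + k) (phi m k) \<psi>" and "h < m + k"
  shows "reduce (\<psi> h) = reduce (phi_inverse m k h)"
proof -
  \<comment> \<open>Letters of psi h outside the basis are fixed by phi and by phi_inverse alike.\<close>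
  have "subst (phi_inverse m k) (phi m k g) = [(g, False)]" for g
    using assms(1,2) subst_phi_inverse_phi[of k m g]
    by (cases "g < m + k") (simp_all add: phi_ge phi_inverse_ge subst_eq_reduce_word_image)
  then have "reduce (\<psi> h) = subst (phi_inverse m k) (subst (phi m k) (\<psi> h))"
    by (simp add: subst_subst_eq_reduce)
  also have "\<dots> = reduce (phi_inverse m k h)"
    using assms(3,4) by (simp add: inverse_on_def subst_eq_reduce_word_image)
  finally show ?thesis .
qed

lemma letters_below_phi_inverse: "1 \<le> k \<Longrightarrow> h < m + k \<Longrightarrow> letters_below (m + k) (phi_inverse m k h)"
  by (auto simp: phi_inverse_def letters_below_def letter_run_def inv_word_def)

lemma dominated_growth_if_iter_len_le:
  assumes "0 < N" and "\<And>g n. g < N \<Longrightarrow> iter_len f n g \<le> D * (n + 1) ^ k"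
  shows "dominated (\<lambda>n. real (growth f N n)) (\<lambda>n. real n ^ k)"
  unfolding dominated_def
proof (intro exI conjI allI)
  fix n :: nat
  have "(n + 1) ^ k \<le> 2 ^ k * n ^ k + 1"
  proof (cases "n = 0")
    case False
    then have "(n + 1) ^ k \<le> (2 * n) ^ k"
      by (intro power_mono) simp_all
    then show ?thesis
      by (simp add: power_mult_distrib)
  qed (cases k, simp_all)
  then have "iter_len f n g \<le> D * (2 ^ k * n ^ k + 1)" if "g < N" for g
    using assms(2)[OF that, of n] mult_le_mono2 le_trans by blast
  then have "growth f N n \<le> D * (2 ^ k * n ^ k + 1)"
    unfolding growth_def using assms(1) by (subst Max_le_iff) auto
  also have "\<dots> \<le> (D * 2 ^ k + 1) * n ^ k + D"
    by (simp add: algebra_simps)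
  finally have "real (growth f N n) \<le> real ((D * 2 ^ k + 1) * n ^ k + D)"
    by (simp only: of_nat_le_iff)
  then show "real (growth f N n) \<le> real (D * 2 ^ k + 1) * real n ^ k + real D"
    by (simp add: algebra_simps)
qed (simp_all add: add_pos_nonneg)

theorem proposition8p1:
  fixes m k :: nat
  assumes "1 \<le> k" and "k \<le> m"
  shows "dominated (\<lambda>n. real (growth (phi m k) (m + k) n)) (\<lambda>n. real n ^ k)
     \<and> (\<exists>\<psi>. inverse_on (m + k) (phi m k) \<psi>)
     \<and> (\<forall>\<psi>. inverse_on (m + k) (phi m k) \<psi> \<longrightarrow>
          dominated (\<lambda>n. real (growth \<psi> (m + k) n)) (\<lambda>n. real n ^ k))"
proof (intro conjI allI impI)
  interpret phi: prefix_conjugation False m "phi m k"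
    using assms(1) by (rule prefix_conjugation_phi)
  interpret psi: prefix_conjugation True m "phi_inverse m k"
    by (rule prefix_conjugation_phi_inverse)
  obtain D where "\<forall>g<m + k. \<forall>n. iter_len (phi m k) n g \<le> D * (n + 1) ^ k"
    using phi.iter_len_polynomial_bound[OF assms(1)] iter_len_phi_recurrence assms(2) by blast
  then show "dominated (\<lambda>n. real (growth (phi m k) (m + k) n)) (\<lambda>n. real n ^ k)"
    using assms(1) by (intro dominated_growth_if_iter_len_le) auto
  show "\<exists>\<psi>. inverse_on (m + k) (phi m k) \<psi>"
    using inverse_on_phi_inverse[OF assms] by blast
  fix \<psi> assume "inverse_on (m + k) (phi m k) \<psi>"
  then have "growth \<psi> (m + k) n = growth (phi_inverse m k) (m + k) n" for n
    using assms letters_below_phi_inverse reduce_eq_phi_inverse_if_inverse_on by (intro growth_cong)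
  moreover obtain D' where "\<forall>g<m + k. \<forall>n. iter_len (phi_inverse m k) n g \<le> D' * (n + 1) ^ k"
    using psi.iter_len_polynomial_bound[OF assms(1)] iter_len_phi_inverse_recurrence assms(2) by blast
  ultimately show "dominated (\<lambda>n. real (growth \<psi> (m + k) n)) (\<lambda>n. real n ^ k)"
    using assms(1) dominated_growth_if_iter_len_le[of "m + k" "phi_inverse m k" D' k] by simp
qed

end
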